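(* Let $L\subset\mathfrak{sl}_2(\mathbb{C}[\lambda])$ be a Lie subalgebra of finite codimension. Then the associative algebra $\mathcal{I}(L)$ is commutative and is isomorphic to the field $\mathbb{C}(\lambda)$ of rational functions in $\lambda$.
   Context: $\mathfrak{sl}_2(\mathbb{C}[\lambda])=\mathfrak{sl}_2(\mathbb{C})\otimes_{\mathbb{C}}\mathbb{C}[\lambda]$ with bracket $[y_1\otimes f_1,y_2\otimes f_2]=[y_1,y_2]\otimes f_1f_2$. For a Lie algebra $\mathfrak{L}$ over $\mathbb{C}$, an admissible pair is $(h,\mathfrak{h})$ with $\mathfrak{h}\subset\mathfrak{L}$ a Lie subalgebra of finite codimension and $h\colon\mathfrak{h}\to\mathfrak{L}$ linear with $h([p_1,p_2])=[h(p_1),p_2]=[p_1,h(p_2)]$ for all $p_1,p_2\in\mathfrak{h}$. Two admissible pairs $(h,\mathfrak{h}),(\tilde h,\tilde{\mathfrak{h}})$ are equivalent if $h$ and $\tilde h$ agree on some subalgebra of finite codimension contained in $\mathfrak{h}\cap\tilde{\mathfrak{h}}$. $\mathcal{I}(\mathfrak{L})$ is the set of equivalence classes, an associative algebra with $c[(h,\mathfrak{h})]=[(ch,\mathfrak{h})]$, $[(h_1,\mathfrak{h}_1)]+[(h_2,\mathfrak{h}_2)]=[(h_1+h_2,\mathfrak{h}_1\cap\mathfrak{h}_2)]$, and $[(h_1,\mathfrak{h}_1)]\cdot[(h_2,\mathfrak{h}_2)]=[(h_1\circ h_2,\hat{\mathfrak{h}})]$ with $\hat{\mathfrak{h}}=\{w\in\mathfrak{h}_1\cap\mathfrak{h}_2: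 h_2(w)\in\mathfrak{h}_1\}$. *)

theory Defs
  imports "HOL-Computational_Algebra.Polynomial" "HOL-Computational_Algebra.Fraction_Field"
begin

text \<open>sl_2(C[lambda]): an element a H + b E + c F (a,b,c complex polynomials) is
  represented by the triple (a,b,c); H, E, F the standard basis of sl_2(C).\<close>
type_synonym sl2 = "complex poly \<times> complex poly \<times> complex poly"

definition sl2_zero :: sl2 where "sl2_zero = (0, 0, 0)"

definition sl2_add :: "sl2 \<Rightarrow> sl2 \<Rightarrow> sl2" where
  "sl2_add x y = (case x of (a, b, c) \<Rightarrow> case y of (a', b', c') \<Rightarrow> (a + a', b + b', c + c'))"

definition sl2_scale :: "complex \<Rightarrow> sl2 \<Rightarrow> sl2" where
  "sl2_scale k x = (case x of (a, b, c) \<Rightarrow> (smult k a, smult k b, smult k c))"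

text \<open>Bracket: [y1 (x) f1, y2 (x) f2] = [y1,y2] (x) f1 f2, with [H,E]=2E, [H,F]=-2F, [E,F]=H.\<close>
definition sl2_bracket :: "sl2 \<Rightarrow> sl2 \<Rightarrow> sl2" where
  "sl2_bracket x y = (case x of (a, b, c) \<Rightarrow> case y of (a', b', c') \<Rightarrow>
      (b * c' - c * b', smult 2 (a * b' - b * a'), smult (-2) (a * c' - c * a')))"

definition subspace_sl2 :: "sl2 set \<Rightarrow> bool" where
  "subspace_sl2 V \<longleftrightarrow> sl2_zero \<in> V \<and> (\<forall>x\<in>V. \<forall>y\<in>V. sl2_add x y \<in> V)
     \<and> (\<forall>k. \<forall>x\<in>V. sl2_scale k x \<in> V)"

definition lie_subalg :: "sl2 set \<Rightarrow> bool" where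
  "lie_subalg V \<longleftrightarrow> subspace_sl2 V \<and> (\<forall>x\<in>V. \<forall>y\<in>V. sl2_bracket x y \<in> V)"

definition fin_codim :: "sl2 set \<Rightarrow> sl2 set \<Rightarrow> bool" where
  "fin_codim W V \<longleftrightarrow> W \<subseteq> V \<and> (\<exists>vs :: sl2 list. set vs \<subseteq> V \<and>
      (\<forall>v\<in>V. \<exists>w\<in>W. \<exists>cs :: complex list. length cs = length vs \<and>
          v = sl2_add w (foldr sl2_add (map2 sl2_scale cs vs) sl2_zero)))"

type_synonym sl2_pair = "(sl2 \<Rightarrow> sl2) \<times> sl2 set"

definition admissible :: "sl2 set \<Rightarrow> sl2_pair \<Rightarrow> bool" where
  "admissible L p \<longleftrightarrow> (case p of (h, hh) \<Rightarrow>
     lie_subalg hh \<and> fin_codim hh L \<and> (\<forall>x\<in>hh. h x \<in> L)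
     \<and> (\<forall>x\<in>hh. \<forall>y\<in>hh. h (sl2_add x y) = sl2_add (h x) (h y))
     \<and> (\<forall>k. \<forall>x\<in>hh. h (sl2_scale k x) = sl2_scale k (h x))
     \<and> (\<forall>p1\<in>hh. \<forall>p2\<in>hh. h (sl2_bracket p1 p2) = sl2_bracket (h p1) p2
                         \<and> h (sl2_bracket p1 p2) = sl2_bracket p1 (h p2)))"

definition adm_equiv :: "sl2 set \<Rightarrow> sl2_pair \<Rightarrow> sl2_pair \<Rightarrow> bool" where
  "adm_equiv L p q \<longleftrightarrow> (\<exists>K. lie_subalg K \<and> fin_codim K L \<and> K \<subseteq> snd p \<inter> snd q
      \<and> (\<forall>x\<in>K. fst p x = fst q x))"

definition adm_scale :: "complex \<Rightarrow> sl2_pair \<Rightarrow> sl2_pair" where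
  "adm_scale k p = ((\<lambda>x. sl2_scale k (fst p x)), snd p)"

definition adm_add :: "sl2_pair \<Rightarrow> sl2_pair \<Rightarrow> sl2_pair" where
  "adm_add p q = ((\<lambda>x. sl2_add (fst p x) (fst q x)), snd p \<inter> snd q)"

definition adm_mul :: "sl2_pair \<Rightarrow> sl2_pair \<Rightarrow> sl2_pair" where
  "adm_mul p q = (fst p \<circ> fst q, {w \<in> snd p \<inter> snd q. fst q w \<in> snd p})"

end

(*
  Every finite-codimensional subalgebra K of sl2(C[lambda]) contains an ideal q sl2(C[lambda])
  with q <> 0: a linear image of C[lambda] meets K nontrivially, which gives a nonconstant u with
  u H in K; the E- and F-parts of K are then u-stable subspaces of finite codimension, hence
  contain principal ideals, and bracketing them fills the H-part.  On such an ideal an admissible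
  map h commutes with the adjoint action, which forces q h(x) = A x for a polynomial A.  So every
  admissible pair acts on some such ideal as multiplication by the rational function A / q, and
  this function determines its equivalence class.  Sums, scalar multiples and composites of pairs
  go to sums, scalar multiples and products of functions (hence composition commutes up to
  equivalence), and a / b is realised by x |-> a (x div b) on the ideal (q b) sl2(C[lambda]).
*)
theory Submission
  imports Defs "HOL-Library.Product_Plus"
begin

lemma sl2_add_eq_plus: "sl2_add = (+)"
  by (intro ext) (auto simp: sl2_add_def split: prod.splits)

lemma sl2_zero_eq_zero: "sl2_zero = 0"
  by (simp add: sl2_zero_def zero_prod_def)

lemma sl2_zero_triple: "(0 :: sl2) = (0, 0, 0)"
  by (simp add: zero_prod_def)

lemma sl2_scale_simp [simp]: "sl2_scale k (a, b, c) = (smult k a, smult k b, smult k c)"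
  by (simp add: sl2_scale_def)

lemma sl2_bracket_simp [simp]:
  "sl2_bracket (a, b, c) (a', b', c') =
     (b * c' - c * b', smult 2 (a * b' - b * a'), smult (-2) (a * c' - c * a'))"
  by (simp add: sl2_bracket_def)

interpretation sl2: vector_space sl2_scale
  by unfold_locales (auto simp: sl2_scale_def smult_add_right smult_add_left split: prod.splits)

interpretation cpoly: vector_space "smult :: complex \<Rightarrow> complex poly \<Rightarrow> complex poly"
  by unfold_locales (auto simp: smult_add_right smult_add_left)

lemma subspace_sl2_iff: "subspace_sl2 V \<longleftrightarrow> sl2.subspace V"
  by (simp add: subspace_sl2_def sl2.subspace_def sl2_add_eq_plus sl2_zero_eq_zero)

lemma lie_subalg_subspace: "lie_subalg V \<Longrightarrow> sl2.subspace V"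
  by (simp add: lie_subalg_def subspace_sl2_iff)

context vector_space
begin

lemma subspace_of_finite_span_finitely_spanned:
  assumes "subspace U" "finite S" "U \<subseteq> span S"
  obtains T where "finite T" "T \<subseteq> U" "span T = U"
proof -
  obtain B where B: "B \<subseteq> U" "independent B" "U \<subseteq> span B"
    using basis_exists by metis
  have "finite B"
    using independent_span_bound[OF assms(2) B(2) subset_trans[OF B(1) assms(3)]] ..
  moreover have "span B = U"
    using span_minimal[OF B(1) assms(1)] B(3) by (rule subset_antisym)
  ultimately show thesis using that B(1) by blast
qed

lemma mem_span_Un_subspace_iff:
  assumes "subspace W"
  shows "v \<in> span (W \<union> S) \<longleftrightarrow> (\<exists>w\<in>W. v - w \<in> span S)"
proof -
  have "v \<in> span (W \<union> S) \<longleftrightarrow> (\<exists>w s. v = w + s \<and> w \<in> W \<and> s \<in> span S)"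
    by (simp add: span_Un span_eq_iff[THEN iffD2, OF assms])
  also have "\<dots> \<longleftrightarrow> (\<exists>w\<in>W. v - w \<in> span S)"
    by (metis add_diff_cancel_left' diff_add_cancel add.commute)
  finally show ?thesis .
qed

lemma eliminate_common_direction:
  fixes \<psi> :: "'a poly \<Rightarrow> 'b"
  assumes V: "subspace V"
    and \<psi>: "\<And>p q. \<psi> (p + q) = \<psi> p + \<psi> q" "\<And>c p. \<psi> (smult c p) = c *s \<psi> p"
    and s: "s \<noteq> 0" "\<psi> s - \<alpha> *s u \<in> V"
    and t: "t \<noteq> 0" "\<psi> (monom 1 N * t) - \<beta> *s u \<in> V" and N: "degree s < N"
  shows "\<exists>p. p \<noteq> 0 \<and> \<psi> p \<in> V"
proof (cases "\<alpha> = 0")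
  case True
  then show ?thesis using s by auto
next
  case False
  \<comment> \<open>this combination kills the u-components, and the degree gap keeps it nonzero\<close>
  define p where "p = smult \<beta> s - smult \<alpha> (monom 1 N * t)"
  have diff: "\<psi> (p - q) = \<psi> p - \<psi> q" for p q
    using \<psi>(1)[of "p - q" q] by (simp add: algebra_simps)
  have "\<psi> p = \<beta> *s \<psi> s - \<alpha> *s \<psi> (monom 1 N * t)"
    by (simp add: p_def diff \<psi>(2))
  also have "\<dots> = \<beta> *s (\<psi> s - \<alpha> *s u) - \<alpha> *s (\<psi> (monom 1 N * t) - \<beta> *s u)"
    by (simp add: scale_right_diff_distrib)
  also have "\<dots> \<in> V"
    using subspace_scale[OF V s(2)] subspace_scale[OF V t(2)] by (rule subspace_diff[OF V])
  finally have "\<psi> p \<in> V" .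
  moreover have "p \<noteq> 0"
  proof
    assume "p = 0"
    then have "smult \<beta> s = smult \<alpha> (monom 1 N * t)" by (simp add: p_def)
    moreover have "degree (smult \<alpha> (monom 1 N * t)) \<ge> N"
      using False t(1) by (simp add: degree_mult_eq degree_monom_eq)
    moreover have "degree (smult \<beta> s) < N"
      using N by (meson degree_smult_le le_less_trans)
    ultimately show False by simp
  qed
  ultimately show ?thesis by blast
qed

lemma polynomial_image_meets_subspace:
  fixes \<psi> :: "'a poly \<Rightarrow> 'b"
  assumes "finite S" "subspace V" "range \<psi> \<subseteq> span (V \<union> S)"
    and "\<And>p q. \<psi> (p + q) = \<psi> p + \<psi> q" "\<And>c p. \<psi> (smult c p) = c *s \<psi> p"
  shows "\<exists>p. p \<noteq> 0 \<and> \<psi> p \<in> V"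
  using assms
proof (induction S arbitrary: V \<psi> rule: finite_induct)
  case empty
  then show ?case
    by (intro exI[of _ 1]) (auto simp: span_eq_iff[THEN iffD2])
next
  case (insert u S)
  define V' where "V' = span (insert u V)"
  have "subspace V'" by (simp add: V'_def)
  have V': "range \<phi> \<subseteq> span (V' \<union> S)"
    if "range \<phi> \<subseteq> span (V \<union> insert u S)" for \<phi> :: "'a poly \<Rightarrow> 'b"
  proof -
    have "V \<union> insert u S \<subseteq> span (V' \<union> S)"
      using span_superset[of "insert u V"] span_superset[of "V' \<union> S"] unfolding V'_def by blast
    then have "span (V \<union> insert u S) \<subseteq> span (V' \<union> S)"
      by (rule span_minimal) simp
    then show ?thesis using that by blast
  qed
  have off_line: "\<exists>\<alpha>. w - \<alpha> *s u \<in> V" if "w \<in> V'" for w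
    using that insert.prems(1) by (simp add: V'_def span_insert span_eq_iff[THEN iffD2])
  obtain s where s: "s \<noteq> 0" "\<psi> s \<in> V'"
    using insert.IH[OF \<open>subspace V'\<close> V'] insert.prems by blast
  then obtain \<alpha> where \<alpha>: "\<psi> s - \<alpha> *s u \<in> V" using off_line by blast
  have "range (\<lambda>t. \<psi> (monom 1 (Suc (degree s)) * t)) \<subseteq> span (V \<union> insert u S)"
    using insert.prems(2) by blast
  then have "\<exists>t. t \<noteq> 0 \<and> \<psi> (monom 1 (Suc (degree s)) * t) \<in> V'"
    by (rule insert.IH[OF \<open>subspace V'\<close> V']) (simp_all add: distrib_left insert.prems(3,4))
  then obtain t \<beta> where "t \<noteq> 0" "\<psi> (monom 1 (Suc (degree s)) * t) - \<beta> *s u \<in> V"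
    using off_line by blast
  then show ?case
    using eliminate_common_direction[OF insert.prems(1,3,4) s(1) \<alpha>] by blast
qed

end

lemma sl2_combinations_eq_span:
  "{foldr (+) (map2 sl2_scale cs vs) 0 | cs. length cs = length vs} = sl2.span (set vs)"
proof (induction vs)
  case Nil
  then show ?case by simp
next
  case (Cons v vs)
  have "x \<in> {foldr (+) (map2 sl2_scale cs (v # vs)) 0 | cs. length cs = length (v # vs)}
    \<longleftrightarrow> (\<exists>k. x - sl2_scale k v \<in> sl2.span (set vs))" for x
  proof
    assume "x \<in> {foldr (+) (map2 sl2_scale cs (v # vs)) 0 | cs. length cs = length (v # vs)}"
    then obtain cs where cs: "length cs = length (v # vs)" "x = foldr (+) (map2 sl2_scale cs (v # vs)) 0"
      by blast
    then obtain k cs' where "cs = k # cs'" by (cases cs) auto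
    with cs have "length cs' = length vs" "x = sl2_scale k v + foldr (+) (map2 sl2_scale cs' vs) 0"
      by simp_all
    then have "x - sl2_scale k v \<in> sl2.span (set vs)"
      using Cons.IH by auto
    then show "\<exists>k. x - sl2_scale k v \<in> sl2.span (set vs)" ..
  next
    assume "\<exists>k. x - sl2_scale k v \<in> sl2.span (set vs)"
    then obtain k cs where "length cs = length vs" "x - sl2_scale k v = foldr (+) (map2 sl2_scale cs vs) 0"
      using Cons.IH by blast
    then show "x \<in> {foldr (+) (map2 sl2_scale cs (v # vs)) 0 | cs. length cs = length (v # vs)}"
      by (intro CollectI exI[of _ "k # cs"]) (auto simp: algebra_simps)
  qed
  then show ?case by (auto simp: sl2.span_insert)
qed

lemma fin_codim_iff_list_span:
  assumes "sl2.subspace W"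
  shows "fin_codim W V \<longleftrightarrow> W \<subseteq> V \<and> (\<exists>vs. set vs \<subseteq> V \<and> V \<subseteq> sl2.span (W \<union> set vs))"
proof -
  have "(\<exists>cs. length cs = length vs \<and> v = w + foldr (+) (map2 sl2_scale cs vs) 0)
      \<longleftrightarrow> v - w \<in> sl2.span (set vs)" for v w vs
  proof
    assume "\<exists>cs. length cs = length vs \<and> v = w + foldr (+) (map2 sl2_scale cs vs) 0"
    then show "v - w \<in> sl2.span (set vs)"
      using sl2_combinations_eq_span[of vs] by auto
  next
    assume "v - w \<in> sl2.span (set vs)"
    then obtain cs where "length cs = length vs" "v - w = foldr (+) (map2 sl2_scale cs vs) 0"
      using sl2_combinations_eq_span[of vs] by blast
    then show "\<exists>cs. length cs = length vs \<and> v = w + foldr (+) (map2 sl2_scale cs vs) 0"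
      by (auto simp: diff_eq_eq add.commute)
  qed
  then have "(\<exists>w\<in>W. \<exists>cs. length cs = length vs \<and> v = w + foldr (+) (map2 sl2_scale cs vs) 0)
      \<longleftrightarrow> v \<in> sl2.span (W \<union> set vs)" for v vs
    by (simp add: sl2.mem_span_Un_subspace_iff[OF assms])
  then show ?thesis
    unfolding fin_codim_def sl2_add_eq_plus sl2_zero_eq_zero by blast
qed

lemma fin_codim_iff_span:
  assumes "sl2.subspace W" "sl2.subspace V"
  shows "fin_codim W V \<longleftrightarrow> W \<subseteq> V \<and> (\<exists>S. finite S \<and> V \<subseteq> sl2.span (W \<union> S))"
  unfolding fin_codim_iff_list_span[OF assms(1)]
proof (intro conj_cong refl iffI)
  assume "\<exists>vs. set vs \<subseteq> V \<and> V \<subseteq> sl2.span (W \<union> set vs)"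
  then show "\<exists>S. finite S \<and> V \<subseteq> sl2.span (W \<union> S)" by blast
next
  assume "W \<subseteq> V" and "\<exists>S. finite S \<and> V \<subseteq> sl2.span (W \<union> S)"
  then obtain S where S: "finite S" "V \<subseteq> sl2.span (W \<union> S)" by blast
  \<comment> \<open>fin_codim wants the extra vectors inside V; a finite spanning set of V \<inter> span S will do\<close>
  obtain T where T: "finite T" "T \<subseteq> V \<inter> sl2.span S" "sl2.span T = V \<inter> sl2.span S"
    using sl2.subspace_of_finite_span_finitely_spanned[of "V \<inter> sl2.span S" S] S(1) assms(2)
    by (auto intro: sl2.subspace_inter)
  have "V \<subseteq> sl2.span (W \<union> T)"
  proof
    fix v assume "v \<in> V"
    then obtain w where w: "w \<in> W" "v - w \<in> sl2.span S"
      using S(2) sl2.mem_span_Un_subspace_iff[OF assms(1)] by blast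
    then have "v - w \<in> V"
      using \<open>v \<in> V\<close> \<open>W \<subseteq> V\<close> sl2.subspace_diff[OF assms(2)] by blast
    then show "v \<in> sl2.span (W \<union> T)"
      using w T(3) by (auto simp: sl2.mem_span_Un_subspace_iff[OF assms(1)])
  qed
  then show "\<exists>vs. set vs \<subseteq> V \<and> V \<subseteq> sl2.span (W \<union> set vs)"
    using T(1,2) finite_list[OF T(1)] by blast
qed

lemma fin_codim_trans:
  assumes "sl2.subspace K" "sl2.subspace L" "sl2.subspace M" "fin_codim K L" "fin_codim L M"
  shows "fin_codim K M"
proof -
  obtain S1 S2 where S: "finite S1" "L \<subseteq> sl2.span (K \<union> S1)" "finite S2" "M \<subseteq> sl2.span (L \<union> S2)"
    and "K \<subseteq> L" "L \<subseteq> M"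
    using assms by (auto simp: fin_codim_iff_span)
  have "L \<union> S2 \<subseteq> sl2.span (K \<union> (S1 \<union> S2))"
    using S(2) sl2.span_mono[of "K \<union> S1" "K \<union> (S1 \<union> S2)"] sl2.span_superset[of "K \<union> (S1 \<union> S2)"]
    by blast
  then have "M \<subseteq> sl2.span (K \<union> (S1 \<union> S2))"
    using S(4) sl2.span_minimal[OF _ sl2.subspace_span] by blast
  then show ?thesis
    using assms(1,3) S(1,3) \<open>K \<subseteq> L\<close> \<open>L \<subseteq> M\<close> by (auto simp: fin_codim_iff_span)
qed

lemma fin_codim_subspace:
  assumes "sl2.subspace K" "sl2.subspace L" "sl2.subspace M" "K \<subseteq> L" "L \<subseteq> M" "fin_codim K M"
  shows "fin_codim K L"
  using assms unfolding fin_codim_iff_span[OF assms(1,2)] fin_codim_iff_span[OF assms(1,3)]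
  by (meson order_trans)

definition sl2_pmult :: "complex poly \<Rightarrow> sl2 \<Rightarrow> sl2" where
  "sl2_pmult r x = (case x of (a, b, c) \<Rightarrow> (r * a, r * b, r * c))"

definition sl2_multiples :: "complex poly \<Rightarrow> sl2 set" where
  "sl2_multiples q = range (sl2_pmult q)"

lemma sl2_pmult_simp [simp]: "sl2_pmult r (a, b, c) = (r * a, r * b, r * c)"
  by (simp add: sl2_pmult_def)

lemma sl2_pmult_add: "sl2_pmult r (x + y) = sl2_pmult r x + sl2_pmult r y"
  by (cases x; cases y) (simp add: algebra_simps)

lemma sl2_pmult_scale: "sl2_pmult r (sl2_scale k x) = sl2_scale k (sl2_pmult r x)"
  by (cases x) simp

lemma sl2_pmult_pmult: "sl2_pmult p (sl2_pmult q x) = sl2_pmult (p * q) x"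
  by (cases x) (simp add: algebra_simps)

lemma sl2_pmult_commute: "sl2_pmult p (sl2_pmult q x) = sl2_pmult q (sl2_pmult p x)"
  by (simp add: sl2_pmult_pmult mult.commute)

lemma sl2_bracket_pmult_left: "sl2_bracket (sl2_pmult r x) y = sl2_pmult r (sl2_bracket x y)"
  by (cases x; cases y) (simp add: algebra_simps)

lemma sl2_bracket_pmult_right: "sl2_bracket x (sl2_pmult r y) = sl2_pmult r (sl2_bracket x y)"
  by (cases x; cases y) (simp add: algebra_simps)

lemma lie_subalg_sl2_multiples: "lie_subalg (sl2_multiples q)"
  unfolding lie_subalg_def subspace_sl2_iff sl2.subspace_def sl2_multiples_def
proof (intro conjI ballI allI)
  show "0 \<in> range (sl2_pmult q)"
    by (rule range_eqI[of _ _ 0]) (simp add: sl2_zero_triple)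
next
  fix x y assume "x \<in> range (sl2_pmult q)" "y \<in> range (sl2_pmult q)"
  then obtain x' y' where "x = sl2_pmult q x'" "y = sl2_pmult q y'" by blast
  then have "x + y = sl2_pmult q (x' + y')"
    and "sl2_bracket x y = sl2_pmult q (sl2_pmult q (sl2_bracket x' y'))"
    by (simp_all add: sl2_pmult_add sl2_bracket_pmult_left sl2_bracket_pmult_right sl2_pmult_pmult)
  then show "x + y \<in> range (sl2_pmult q)" "sl2_bracket x y \<in> range (sl2_pmult q)" by auto
next
  fix c x assume "x \<in> range (sl2_pmult q)"
  then obtain x' where "x = sl2_pmult q x'" by blast
  then have "sl2_scale c x = sl2_pmult q (sl2_scale c x')" by (simp add: sl2_pmult_scale)
  then show "sl2_scale c x \<in> range (sl2_pmult q)" by simp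
qed

lemma sl2_multiples_mult_subset: "sl2_multiples (p * q) \<subseteq> sl2_multiples p \<inter> sl2_multiples q"
  unfolding sl2_multiples_def by (metis Int_subset_iff image_subset_iff rangeI sl2_pmult_pmult mult.commute)

lemma pmult_in_sl2_multiples: "sl2_pmult q y \<in> sl2_multiples q"
  unfolding sl2_multiples_def by (rule rangeI)

lemma sl2_bounded_degree_in_span:
  assumes "degree a \<le> n" "degree b \<le> n" "degree c \<le> n"
  shows "(a, b, c) \<in> sl2.span (\<Union>i\<le>n. {(monom 1 i, 0, 0), (0, monom 1 i, 0), (0, 0, monom 1 i)})"
proof -
  have "(a, b, c) = (\<Sum>i\<le>n. sl2_scale (coeff a i) (monom 1 i, 0, 0)
      + sl2_scale (coeff b i) (0, monom 1 i, 0) + sl2_scale (coeff c i) (0, 0, monom 1 i))"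
    using assms by (simp add: sum_prod smult_monom poly_as_sum_of_monoms')
  also have "\<dots> \<in> sl2.span (\<Union>i\<le>n. {(monom 1 i, 0, 0), (0, monom 1 i, 0), (0, 0, monom 1 i)})"
    by (intro sl2.span_sum sl2.span_add sl2.span_scale sl2.span_base) auto
  finally show ?thesis .
qed

lemma fin_codim_sl2_multiples:
  assumes "q \<noteq> 0" "sl2.subspace L" "sl2_multiples q \<subseteq> L"
  shows "fin_codim (sl2_multiples q) L"
proof -
  have sub: "sl2.subspace (sl2_multiples q)"
    using lie_subalg_sl2_multiples lie_subalg_subspace by blast
  let ?B = "\<Union>i\<le>degree q. {(monom 1 i, 0, 0), (0, monom 1 i, 0), (0, 0, monom 1 i)} :: sl2 set"
  have "v \<in> sl2.span (sl2_multiples q \<union> ?B)" for v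
  proof -
    obtain a b c where v: "v = (a, b, c)" by (cases v)
    have "degree (x mod q) \<le> degree q" for x
      using degree_mod_less[OF assms(1), of x] by auto
    then have "v - sl2_pmult q (a div q, b div q, c div q) \<in> sl2.span ?B"
      by (simp add: v minus_mult_div_eq_mod sl2_bounded_degree_in_span)
    moreover have "sl2_pmult q (a div q, b div q, c div q) \<in> sl2_multiples q"
      by (rule pmult_in_sl2_multiples)
    ultimately show ?thesis
      using sl2.mem_span_Un_subspace_iff[OF sub] by blast
  qed
  then have "fin_codim (sl2_multiples q) UNIV"
    using sub by (auto simp: fin_codim_iff_span intro!: exI[of _ ?B])
  then show ?thesis
    using fin_codim_subspace[OF sub assms(2) sl2.subspace_UNIV assms(3)] by blast
qed

lemma pcompose_mult_mem:
  assumes "cpoly.subspace J" "\<And>p. p \<in> J \<Longrightarrow> u * p \<in> J" "p \<in> J"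
  shows "pcompose t u * p \<in> J"
proof (induction t)
  case 0
  then show ?case using cpoly.subspace_0[OF assms(1)] by simp
next
  case (pCons a t)
  have "pcompose (pCons a t) u * p = smult a p + u * (pcompose t u * p)"
    by (simp add: pcompose_pCons algebra_simps)
  then show ?case
    using pCons.IH assms cpoly.subspace_add cpoly.subspace_scale by metis
qed

lemma mult_mem_if_monom_mults_mem:
  assumes J: "cpoly.subspace J" "\<And>p. p \<in> J \<Longrightarrow> u * p \<in> J"
    and u: "degree u > 0" and P: "\<And>i. i < degree u \<Longrightarrow> monom 1 i * P \<in> J"
  shows "P * r \<in> J"
proof (induction r rule: measure_induct_rule[of degree])
  case (less r)
  show ?case
  proof (cases "degree r < degree u")
    case True
    have "P * r = (\<Sum>i\<le>degree r. monom (coeff r i) i) * P"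
      by (simp add: poly_as_sum_of_monoms mult.commute)
    also have "\<dots> = (\<Sum>i\<le>degree r. smult (coeff r i) (monom 1 i * P))"
      by (simp add: sum_distrib_right smult_monom_mult)
    also have "\<dots> \<in> J"
      using True P by (intro cpoly.subspace_sum[OF J(1)] cpoly.subspace_scale[OF J(1)]) auto
    finally show ?thesis .
  next
    case False
    have "P * r = P * (r div u * u + r mod u)" by (simp only: div_mult_mod_eq)
    also have "\<dots> = u * (P * (r div u)) + P * (r mod u)"
      by (simp only: distrib_left mult.left_commute mult.commute)
    finally have "P * r = u * (P * (r div u)) + P * (r mod u)" .
    moreover have "degree (r div u) < degree r"
      using False u by (intro degree_div_less) auto
    moreover have "degree (r mod u) < degree r"
      using False u degree_mod_less[of u r] by (cases "u = 0") auto
    ultimately show ?thesis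
      using less J by (metis cpoly.subspace_add)
  qed
qed

lemma poly_ideal_in_stable_subspace:
  assumes J: "cpoly.subspace J" "\<And>p. p \<in> J \<Longrightarrow> u * p \<in> J" and u: "degree u > 0"
    and meets: "\<And>\<psi>. (\<And>p q. \<psi> (p + q) = \<psi> p + \<psi> q) \<Longrightarrow> (\<And>c p. \<psi> (smult c p) = smult c (\<psi> p))
                  \<Longrightarrow> \<exists>p. p \<noteq> 0 \<and> \<psi> p \<in> J"
  shows "\<exists>P. P \<noteq> 0 \<and> (\<forall>r. P * r \<in> J)"
proof -
  \<comment> \<open>the monomials of degree below degree u generate C[X] as a C[u]-module\<close>
  have "\<exists>s. s \<noteq> 0 \<and> monom 1 i * pcompose s u \<in> J" for i
    by (rule meets) (simp_all add: pcompose_add pcompose_smult algebra_simps)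
  then obtain s where s: "\<And>i. s i \<noteq> 0" "\<And>i. monom 1 i * pcompose (s i) u \<in> J"
    by metis
  define P where "P = pcompose (\<Prod>i<degree u. s i) u"
  have "P \<noteq> 0"
    using u s(1) by (simp add: P_def pcompose_eq_0_iff)
  moreover have "monom 1 i * P \<in> J" if "i < degree u" for i
  proof -
    have "monom 1 i * P = pcompose (\<Prod>j\<in>{..<degree u} - {i}. s j) u * (monom 1 i * pcompose (s i) u)"
      using that by (simp add: P_def prod.remove pcompose_mult algebra_simps)
    then show ?thesis
      by (simp only: pcompose_mult_mem[OF J s(2)])
  qed
  ultimately show ?thesis
    using mult_mem_if_monom_mults_mem[OF J u] by blast
qed

lemma line_contains_poly_ideal:
  fixes \<iota> :: "complex poly \<Rightarrow> sl2"
  assumes K: "sl2.subspace K" "fin_codim K UNIV"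
    and \<iota>: "\<And>p q. \<iota> (p + q) = \<iota> p + \<iota> q" "\<And>c p. \<iota> (smult c p) = sl2_scale c (\<iota> p)"
    and u: "degree u > 0" "\<And>p. \<iota> p \<in> K \<Longrightarrow> \<iota> (u * p) \<in> K"
  shows "\<exists>P. P \<noteq> 0 \<and> (\<forall>r. \<iota> (P * r) \<in> K)"
proof -
  obtain S where S: "finite S" "UNIV \<subseteq> sl2.span (K \<union> S)"
    using K by (auto simp: fin_codim_iff_span)
  have "\<iota> 0 = 0"
    using \<iota>(1)[of 0 0] by simp
  have "\<exists>P. P \<noteq> 0 \<and> (\<forall>r. P * r \<in> {p. \<iota> p \<in> K})"
  proof (rule poly_ideal_in_stable_subspace)
    show "cpoly.subspace {p. \<iota> p \<in> K}"
      using K(1) \<iota> \<open>\<iota> 0 = 0\<close> by (auto simp: cpoly.subspace_def sl2.subspace_def)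
    show "\<And>p. p \<in> {p. \<iota> p \<in> K} \<Longrightarrow> u * p \<in> {p. \<iota> p \<in> K}" "degree u > 0"
      using u by auto
  next
    fix \<psi> :: "complex poly \<Rightarrow> complex poly"
    assume \<psi>: "\<And>p q. \<psi> (p + q) = \<psi> p + \<psi> q" "\<And>c p. \<psi> (smult c p) = smult c (\<psi> p)"
    have "\<exists>p. p \<noteq> 0 \<and> (\<iota> \<circ> \<psi>) p \<in> K"
      by (rule sl2.polynomial_image_meets_subspace[OF S(1) K(1)]) (use S(2) in \<open>auto simp: \<iota> \<psi>\<close>)
    then show "\<exists>p. p \<noteq> 0 \<and> \<psi> p \<in> {p. \<iota> p \<in> K}" by simp
  qed
  then show ?thesis by simp
qed

lemma lie_subalg_contains_sl2_multiples:
  assumes "lie_subalg K" "fin_codim K UNIV"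
  shows "\<exists>q. q \<noteq> 0 \<and> sl2_multiples q \<subseteq> K"
proof -
  have K: "sl2.subspace K" using assms(1) by (rule lie_subalg_subspace)
  have bracket: "sl2_bracket x y \<in> K" if "x \<in> K" "y \<in> K" for x y
    using assms(1) that by (simp add: lie_subalg_def)
  obtain S where S: "finite S" "UNIV \<subseteq> sl2.span (K \<union> S)"
    using K assms(2) by (auto simp: fin_codim_iff_span)
  obtain s where s: "s \<noteq> 0" "([:0, 1:] * s, 0, 0) \<in> K"
    using sl2.polynomial_image_meets_subspace[OF S(1) K, of "\<lambda>s. ([:0, 1:] * s, 0, 0)"] S(2)
    by (auto simp: algebra_simps)
  define u where "u = [:0, 1:] * s"
  have u: "degree u > 0" "(u, 0, 0) \<in> K"
    using s by (simp_all add: u_def degree_mult_eq)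
  \<comment> \<open>[u H, b E] = 2 u b E and [u H, c F] = -2 u c F make the E- and F-parts of K u-stable\<close>
  obtain PE where PE: "PE \<noteq> 0" "\<And>r. (0, PE * r, 0) \<in> K"
  proof -
    have "(0, u * b, 0) \<in> K" if "(0, b, 0) \<in> K" for b
      using sl2.subspace_scale[OF K bracket[OF u(2) that], of "1 / 2"] by simp
    then show thesis
      using line_contains_poly_ideal[OF K assms(2), of "\<lambda>b. (0, b, 0)" u] u(1) that
      by (auto simp: smult_add_right)
  qed
  obtain PF where PF: "PF \<noteq> 0" "\<And>r. (0, 0, PF * r) \<in> K"
  proof -
    have "(0, 0, u * c) \<in> K" if "(0, 0, c) \<in> K" for c
      using sl2.subspace_scale[OF K bracket[OF u(2) that], of "- 1 / 2"] by simp
    then show thesis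
      using line_contains_poly_ideal[OF K assms(2), of "\<lambda>c. (0, 0, c)" u] u(1) that
      by (auto simp: smult_add_right)
  qed
  have "sl2_pmult (PE * PF) y \<in> K" for y
  proof -
    obtain a b c where y: "y = (a, b, c)" by (cases y)
    have "sl2_pmult (PE * PF) y
        = sl2_bracket (0, PE * a, 0) (0, 0, PF) + ((0, PE * (PF * b), 0) + (0, 0, PF * (PE * c)))"
      by (simp add: y algebra_simps)
    also have "\<dots> \<in> K"
      using bracket[OF PE(2) PF(2)[of 1]] by (intro sl2.subspace_add[OF K] PE(2) PF(2)) simp
    finally show ?thesis .
  qed
  then have "sl2_multiples (PE * PF) \<subseteq> K"
    unfolding sl2_multiples_def by blast
  then show ?thesis
    using PE(1) PF(1) by (intro exI[of _ "PE * PF"]) simp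
qed

lemma sl2_eq_if_brackets_eq:
  assumes "sl2_bracket x (1, 0, 0) = sl2_bracket y (1, 0, 0)" "sl2_bracket x (0, 1, 0) = sl2_bracket y (0, 1, 0)"
  shows "x = y"
  using assms by (cases x; cases y) simp

lemma bracket_compatible_map_is_multiplier:
  assumes q: "q \<noteq> 0" "sl2_multiples q \<subseteq> hh"
    and left: "\<And>x y. x \<in> hh \<Longrightarrow> y \<in> hh \<Longrightarrow> h (sl2_bracket x y) = sl2_bracket (h x) y"
    and right: "\<And>x y. x \<in> hh \<Longrightarrow> y \<in> hh \<Longrightarrow> h (sl2_bracket x y) = sl2_bracket x (h y)"
  shows "\<exists>A. \<forall>x\<in>hh. sl2_pmult q (h x) = sl2_pmult A x"
proof -
  have mem: "sl2_pmult q y \<in> hh" for y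
    using q(2) by (auto simp: sl2_multiples_def)
  have "h 0 = 0"
  proof -
    have "(0 :: sl2) \<in> hh" using mem[of 0] by (simp add: sl2_zero_triple)
    then have "h 0 = sl2_bracket (h 0) 0"
      using left[of 0 0] by (simp add: sl2_zero_triple)
    then show ?thesis by (cases "h 0") (simp add: sl2_zero_triple)
  qed
  have self: "sl2_bracket (h z) z = 0" if "z \<in> hh" for z
    using left[OF that that] \<open>h 0 = 0\<close> by (cases z) (simp add: sl2_zero_triple mult.commute)
  \<comment> \<open>[h z, z] = h [z, z] = 0 forces h (q H) = A H and then h (q E) = A E\<close>
  obtain A b c where hH: "h (q, 0, 0) = (A, b, c)" by (cases "h (q, 0, 0)")
  have H: "h (sl2_pmult q (1, 0, 0)) = sl2_pmult A (1, 0, 0)"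
    using self[OF mem[of "(1, 0, 0)"]] hH q(1) by (simp add: sl2_zero_triple)
  have E: "h (sl2_pmult q (0, 1, 0)) = sl2_pmult A (0, 1, 0)"
  proof -
    obtain \<alpha> \<beta> \<gamma> where hE: "h (0, q, 0) = (\<alpha>, \<beta>, \<gamma>)" by (cases "h (0, q, 0)")
    have "\<alpha> = 0" "\<gamma> = 0"
      using self[OF mem[of "(0, 1, 0)"]] hE q(1) by (simp_all add: sl2_zero_triple)
    moreover have "sl2_bracket (h (q, 0, 0)) (0, q, 0) = sl2_bracket (q, 0, 0) (h (0, q, 0))"
      using left[OF mem mem, of "(1, 0, 0)" "(0, 1, 0)"] right[OF mem mem, of "(1, 0, 0)" "(0, 1, 0)"]
      by simp
    ultimately have "\<beta> = A"
      using H hE hH q(1) by (simp add: mult.commute)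
    then show ?thesis using hE \<open>\<alpha> = 0\<close> \<open>\<gamma> = 0\<close> by simp
  qed
  have "sl2_bracket (sl2_pmult q (h x)) y = sl2_bracket (sl2_pmult A x) y"
    if "x \<in> hh" "h (sl2_pmult q y) = sl2_pmult A y" for x y
  proof -
    have "sl2_bracket (sl2_pmult q (h x)) y = h (sl2_bracket x (sl2_pmult q y))"
      using left[OF that(1) mem] by (simp add: sl2_bracket_pmult_left sl2_bracket_pmult_right)
    also have "\<dots> = sl2_bracket (sl2_pmult A x) y"
      using right[OF that(1) mem] that(2) by (simp add: sl2_bracket_pmult_left sl2_bracket_pmult_right)
    finally show ?thesis .
  qed
  then show ?thesis
    using H E by (blast intro: sl2_eq_if_brackets_eq)
qed

definition fract_multiple :: "complex poly fract \<Rightarrow> sl2 \<Rightarrow> sl2 \<Rightarrow> bool" where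
  "fract_multiple f x y \<longleftrightarrow> (case x of (a, b, c) \<Rightarrow> case y of (a', b', c') \<Rightarrow>
     Fract a' 1 = f * Fract a 1 \<and> Fract b' 1 = f * Fract b 1 \<and> Fract c' 1 = f * Fract c 1)"

lemma Fract_one_eq_iff: "Fract a 1 = Fract b 1 \<longleftrightarrow> a = b"
  by (simp add: eq_fract)

lemma Fract_one_add: "Fract (a + b) 1 = Fract a 1 + Fract b 1"
  by simp

lemma Fract_one_smult: "Fract (smult k a) 1 = Fract [:k:] 1 * Fract a 1"
  by simp

lemma fract_multiple_simp [simp]:
  "fract_multiple f (a, b, c) (a', b', c') \<longleftrightarrow>
     Fract a' 1 = f * Fract a 1 \<and> Fract b' 1 = f * Fract b 1 \<and> Fract c' 1 = f * Fract c 1"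
  by (simp add: fract_multiple_def)

lemma fract_multiple_unique: "fract_multiple f x y \<Longrightarrow> fract_multiple f x y' \<Longrightarrow> y = y'"
  by (cases x; cases y; cases y') (simp, metis Fract_one_eq_iff)

lemma fract_multiple_determines_fract:
  assumes "q \<noteq> 0" "fract_multiple f (q, 0, 0) y" "fract_multiple g (q, 0, 0) y"
  shows "f = g"
proof -
  have "f * Fract q 1 = g * Fract q 1" "Fract q 1 \<noteq> 0"
    using assms by (cases y; simp add: Zero_fract_def eq_fract)+
  then show ?thesis by simp
qed

lemma fract_multiple_if_pmult_eq:
  "b \<noteq> 0 \<Longrightarrow> sl2_pmult b y = sl2_pmult a x \<Longrightarrow> fract_multiple (Fract a b) x y"
  by (cases x; cases y) (simp add: eq_fract algebra_simps)

lemma fract_multiple_pmult: "b \<noteq> 0 \<Longrightarrow> fract_multiple (Fract a b) (sl2_pmult b x) (sl2_pmult a x)"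
  by (simp add: fract_multiple_if_pmult_eq sl2_pmult_commute)

lemma fract_multiple_scale: "fract_multiple f x y \<Longrightarrow> fract_multiple (Fract [:k:] 1 * f) x (sl2_scale k y)"
  by (cases x; cases y) (simp add: Fract_one_smult)

lemma fract_multiple_add: "fract_multiple f x y \<Longrightarrow> fract_multiple g x z \<Longrightarrow> fract_multiple (f + g) x (y + z)"
  by (cases x; cases y; cases z) (simp add: Fract_one_add distrib_right)

lemma fract_multiple_trans: "fract_multiple g x y \<Longrightarrow> fract_multiple f y z \<Longrightarrow> fract_multiple (f * g) x z"
  by (cases x; cases y; cases z) (simp add: mult.assoc)

definition represents :: "sl2 set \<Rightarrow> sl2_pair \<Rightarrow> complex poly fract \<Rightarrow> bool" where
  "represents L P f \<longleftrightarrow> (\<exists>q. q \<noteq> 0 \<and> sl2_multiples q \<subseteq> L \<inter> snd P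
      \<and> (\<forall>x\<in>sl2_multiples q. fract_multiple f x (fst P x)))"

lemma represents_unique:
  assumes "represents L P f" "represents L P g"
  shows "f = g"
proof -
  obtain q1 q2 where q: "q1 \<noteq> 0" "q2 \<noteq> 0"
    and f: "\<forall>x\<in>sl2_multiples q1. fract_multiple f x (fst P x)"
    and g: "\<forall>x\<in>sl2_multiples q2. fract_multiple g x (fst P x)"
    using assms unfolding represents_def by blast
  have "(q1 * q2, 0, 0) \<in> sl2_multiples q1 \<inter> sl2_multiples q2"
    using sl2_multiples_mult_subset pmult_in_sl2_multiples[of "q1 * q2" "(1, 0, 0)"] by auto
  then show ?thesis
    using f g q by (auto intro: fract_multiple_determines_fract[of "q1 * q2"])
qed

lemma represents_scale: "represents L P f \<Longrightarrow> represents L (adm_scale k P) (Fract [:k:] 1 * f)"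
  unfolding represents_def adm_scale_def fst_conv snd_conv by (meson fract_multiple_scale)

lemma represents_add:
  assumes "represents L P f" "represents L Q g"
  shows "represents L (adm_add P Q) (f + g)"
proof -
  obtain q1 q2 where q: "q1 \<noteq> 0" "q2 \<noteq> 0"
    "sl2_multiples q1 \<subseteq> L \<inter> snd P" "sl2_multiples q2 \<subseteq> snd Q"
    and f: "\<forall>x\<in>sl2_multiples q1. fract_multiple f x (fst P x)"
    and g: "\<forall>x\<in>sl2_multiples q2. fract_multiple g x (fst Q x)"
    using assms unfolding represents_def by blast
  have "fract_multiple (f + g) x (fst P x + fst Q x)" if "x \<in> sl2_multiples (q1 * q2)" for x
    using that f g sl2_multiples_mult_subset[of q1 q2] by (blast intro: fract_multiple_add)
  moreover have "q1 * q2 \<noteq> 0" using q by simp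
  ultimately show ?thesis
    unfolding represents_def adm_add_def sl2_add_eq_plus fst_conv snd_conv
    using q sl2_multiples_mult_subset[of q1 q2] by (intro exI[of _ "q1 * q2"]) blast
qed

lemma represents_mul:
  assumes "represents L P f" "represents L Q g"
  shows "represents L (adm_mul P Q) (f * g)"
proof -
  obtain q1 q2 where q: "q1 \<noteq> 0" "q2 \<noteq> 0"
    "sl2_multiples q1 \<subseteq> L \<inter> snd P" "sl2_multiples q2 \<subseteq> snd Q"
    and f: "\<forall>x\<in>sl2_multiples q1. fract_multiple f x (fst P x)"
    and g: "\<forall>x\<in>sl2_multiples q2. fract_multiple g x (fst Q x)"
    using assms unfolding represents_def by blast
  obtain a b where ab: "g = Fract a b" "b \<noteq> 0" by (cases g)
  \<comment> \<open>the extra factor b makes Q map the ideal into q1 sl2, where P is defined\<close>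
  define q where "q = q1 * q2 * b"
  have sub: "sl2_multiples q \<subseteq> sl2_multiples q1 \<inter> sl2_multiples q2"
    using sl2_multiples_mult_subset[of "q1 * q2" b] sl2_multiples_mult_subset[of q1 q2]
    unfolding q_def by blast
  have "x \<in> snd (adm_mul P Q) \<and> fract_multiple (f * g) x (fst (adm_mul P Q) x)"
    if x: "x \<in> sl2_multiples q" for x
  proof -
    obtain y where "x = sl2_pmult (q1 * q2 * b) y"
      using x by (auto simp: sl2_multiples_def q_def)
    then have y: "x = sl2_pmult b (sl2_pmult (q1 * q2) y)"
      by (simp add: sl2_pmult_pmult mult.commute)
    have "fract_multiple g x (sl2_pmult a (sl2_pmult (q1 * q2) y))"
      unfolding y ab(1) by (rule fract_multiple_pmult[OF ab(2)])
    moreover have "fract_multiple g x (fst Q x)"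
      using g sub x by blast
    ultimately have "fst Q x = sl2_pmult a (sl2_pmult (q1 * q2) y)"
      by (rule fract_multiple_unique[rotated])
    also have "\<dots> = sl2_pmult q1 (sl2_pmult (a * q2) y)"
      by (simp add: sl2_pmult_pmult ac_simps)
    finally have Qx: "fst Q x \<in> sl2_multiples q1"
      by (simp add: pmult_in_sl2_multiples)
    have "x \<in> snd (adm_mul P Q)"
      using Qx x sub q(3,4) by (auto simp: adm_mul_def)
    moreover have "fract_multiple (f * g) x (fst P (fst Q x))"
      using f g Qx x sub by (blast intro: fract_multiple_trans)
    ultimately show ?thesis by (simp add: adm_mul_def)
  qed
  moreover have "q \<noteq> 0" "sl2_multiples q \<subseteq> L"
    using q ab(2) sub by (auto simp: q_def)
  ultimately show ?thesis
    unfolding represents_def by blast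
qed

definition fraction_map :: "complex poly \<Rightarrow> complex poly \<Rightarrow> sl2 \<Rightarrow> sl2" where
  "fraction_map a b x = (case x of (x1, x2, x3) \<Rightarrow> (a * (x1 div b), a * (x2 div b), a * (x3 div b)))"

lemma fraction_map_pmult: "b \<noteq> 0 \<Longrightarrow> fraction_map a b (sl2_pmult (q * b) y) = sl2_pmult (a * q) y"
  by (cases y) (simp add: fraction_map_def ac_simps)

lemma admissible_fraction_map:
  assumes "q \<noteq> 0" "b \<noteq> 0" "sl2.subspace L" "sl2_multiples q \<subseteq> L"
  shows "admissible L (fraction_map a b, sl2_multiples (q * b))"
  unfolding admissible_def prod.case sl2_add_eq_plus
proof (intro conjI ballI allI)
  have mem: "x \<in> sl2_multiples (q * b) \<Longrightarrow> \<exists>y. x = sl2_pmult (q * b) y" for x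
    by (auto simp: sl2_multiples_def)
  note h = fraction_map_pmult[OF assms(2)]
  show "lie_subalg (sl2_multiples (q * b))" by (rule lie_subalg_sl2_multiples)
  show "fin_codim (sl2_multiples (q * b)) L"
    using assms sl2_multiples_mult_subset[of q b] by (intro fin_codim_sl2_multiples) auto
  fix x x' assume "x \<in> sl2_multiples (q * b)" "x' \<in> sl2_multiples (q * b)"
  then obtain y y' where x: "x = sl2_pmult (q * b) y" "x' = sl2_pmult (q * b) y'" using mem by blast
  have "fraction_map a b x = sl2_pmult (a * q) y"
    by (simp add: x h)
  also have "\<dots> = sl2_pmult q (sl2_pmult a y)"
    by (simp add: sl2_pmult_pmult mult.commute)
  finally have "fraction_map a b x = sl2_pmult q (sl2_pmult a y)" .
  then show "fraction_map a b x \<in> L"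
    using subsetD[OF assms(4) pmult_in_sl2_multiples[of q "sl2_pmult a y"]] by simp
  show "fraction_map a b (x + x') = fraction_map a b x + fraction_map a b x'"
    by (simp add: x h sl2_pmult_add[symmetric])
  show "fraction_map a b (sl2_scale k x) = sl2_scale k (fraction_map a b x)" for k
    by (simp add: x h sl2_pmult_scale[symmetric])
  have "sl2_bracket x x' = sl2_pmult (q * b) (sl2_pmult (q * b) (sl2_bracket y y'))"
    by (simp add: x sl2_bracket_pmult_left sl2_bracket_pmult_right)
  then have "fraction_map a b (sl2_bracket x x') = sl2_pmult (a * q) (sl2_pmult (q * b) (sl2_bracket y y'))"
    by (simp add: h)
  moreover have "sl2_bracket (fraction_map a b x) x' = sl2_pmult (a * q) (sl2_pmult (q * b) (sl2_bracket y y'))"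
    and "sl2_bracket x (fraction_map a b x') = sl2_pmult (a * q) (sl2_pmult (q * b) (sl2_bracket y y'))"
    by (simp_all add: x h sl2_bracket_pmult_left sl2_bracket_pmult_right
        sl2_pmult_commute[of "q * b" "a * q"])
  ultimately show "fraction_map a b (sl2_bracket x x') = sl2_bracket (fraction_map a b x) x'"
    "fraction_map a b (sl2_bracket x x') = sl2_bracket x (fraction_map a b x')"
    by simp_all
qed

lemma represents_fraction_map:
  assumes "q \<noteq> 0" "b \<noteq> 0" "sl2_multiples q \<subseteq> L"
  shows "represents L (fraction_map a b, sl2_multiples (q * b)) (Fract a b)"
proof -
  have "fract_multiple (Fract a b) (sl2_pmult (q * b) y) (fraction_map a b (sl2_pmult (q * b) y))" for y
  proof -
    have "fract_multiple (Fract a b) (sl2_pmult b (sl2_pmult q y)) (sl2_pmult a (sl2_pmult q y))"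
      by (rule fract_multiple_pmult[OF assms(2)])
    then show ?thesis
      unfolding fraction_map_pmult[OF assms(2)] by (simp add: sl2_pmult_pmult mult.commute)
  qed
  then have "\<forall>x\<in>sl2_multiples (q * b). fract_multiple (Fract a b) x (fraction_map a b x)"
    by (simp add: sl2_multiples_def)
  moreover have "sl2_multiples (q * b) \<subseteq> L"
    using assms(3) sl2_multiples_mult_subset[of q b] by blast
  ultimately show ?thesis
    using assms(1,2) unfolding represents_def fst_conv snd_conv by (intro exI[of _ "q * b"]) simp
qed

locale finite_codim_subalgebra =
  fixes L :: "sl2 set"
  assumes lie_subalg_L: "lie_subalg L" and fin_codim_L: "fin_codim L UNIV"
begin

lemma subspace_L: "sl2.subspace L"
  using lie_subalg_L by (rule lie_subalg_subspace)

lemma subalgebra_contains_sl2_multiples: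
  assumes "lie_subalg K" "fin_codim K L"
  shows "\<exists>q. q \<noteq> 0 \<and> sl2_multiples q \<subseteq> K"
  using assms lie_subalg_contains_sl2_multiples fin_codim_trans[OF _ subspace_L sl2.subspace_UNIV _ fin_codim_L]
    lie_subalg_subspace by blast

lemma adm_equiv_iff_sl2_multiples:
  "adm_equiv L P Q \<longleftrightarrow> (\<exists>q. q \<noteq> 0 \<and> sl2_multiples q \<subseteq> L \<inter> snd P \<inter> snd Q
      \<and> (\<forall>x\<in>sl2_multiples q. fst P x = fst Q x))"
proof
  assume "adm_equiv L P Q"
  then obtain K where K: "lie_subalg K" "fin_codim K L" "K \<subseteq> snd P \<inter> snd Q" "\<forall>x\<in>K. fst P x = fst Q x"
    unfolding adm_equiv_def by blast
  moreover obtain q where "q \<noteq> 0" "sl2_multiples q \<subseteq> K"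
    using subalgebra_contains_sl2_multiples[OF K(1,2)] by blast
  moreover have "K \<subseteq> L" using K(2) by (simp add: fin_codim_def)
  ultimately show "\<exists>q. q \<noteq> 0 \<and> sl2_multiples q \<subseteq> L \<inter> snd P \<inter> snd Q
      \<and> (\<forall>x\<in>sl2_multiples q. fst P x = fst Q x)"
    by blast
next
  assume "\<exists>q. q \<noteq> 0 \<and> sl2_multiples q \<subseteq> L \<inter> snd P \<inter> snd Q
      \<and> (\<forall>x\<in>sl2_multiples q. fst P x = fst Q x)"
  then show "adm_equiv L P Q"
    unfolding adm_equiv_def
    using lie_subalg_sl2_multiples fin_codim_sl2_multiples[OF _ subspace_L] by blast
qed

lemma represents_imp_adm_equiv:
  assumes "represents L P f" "represents L Q f"
  shows "adm_equiv L P Q"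
proof -
  obtain q1 q2 where q: "q1 \<noteq> 0" "q2 \<noteq> 0" "sl2_multiples q1 \<subseteq> L \<inter> snd P" "sl2_multiples q2 \<subseteq> snd Q"
    and P: "\<forall>x\<in>sl2_multiples q1. fract_multiple f x (fst P x)"
    and Q: "\<forall>x\<in>sl2_multiples q2. fract_multiple f x (fst Q x)"
    using assms unfolding represents_def by blast
  have "q1 * q2 \<noteq> 0" using q by simp
  moreover have "\<forall>x\<in>sl2_multiples (q1 * q2). fst P x = fst Q x"
    using P Q sl2_multiples_mult_subset[of q1 q2] fract_multiple_unique by blast
  ultimately show ?thesis
    unfolding adm_equiv_iff_sl2_multiples using q sl2_multiples_mult_subset[of q1 q2] by blast
qed

lemma adm_equiv_represents:
  assumes "adm_equiv L P Q" "represents L P f"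
  shows "represents L Q f"
proof -
  obtain q1 where q1: "q1 \<noteq> 0" "sl2_multiples q1 \<subseteq> L \<inter> snd P \<inter> snd Q"
    and eq: "\<forall>x\<in>sl2_multiples q1. fst P x = fst Q x"
    using assms(1) unfolding adm_equiv_iff_sl2_multiples by blast
  obtain q2 where q2: "q2 \<noteq> 0" and P: "\<forall>x\<in>sl2_multiples q2. fract_multiple f x (fst P x)"
    using assms(2) unfolding represents_def by blast
  have "fract_multiple f x (fst Q x)" if "x \<in> sl2_multiples (q1 * q2)" for x
  proof -
    have "x \<in> sl2_multiples q1" "x \<in> sl2_multiples q2"
      using that sl2_multiples_mult_subset by blast+
    then show ?thesis using eq P by metis
  qed
  moreover have "q1 * q2 \<noteq> 0" using q1 q2 by simp
  ultimately show ?thesis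
    unfolding represents_def using q1 sl2_multiples_mult_subset[of q1 q2]
    by (intro exI[of _ "q1 * q2"]) blast
qed

lemma admissible_represents:
  assumes "admissible L P"
  shows "\<exists>f. represents L P f"
proof -
  obtain h hh where P: "P = (h, hh)" by (cases P)
  have "lie_subalg hh \<and> fin_codim hh L \<and> (\<forall>x\<in>hh. \<forall>y\<in>hh.
      h (sl2_bracket x y) = sl2_bracket (h x) y \<and> h (sl2_bracket x y) = sl2_bracket x (h y))"
    using assms unfolding P admissible_def prod.case by blast
  then have hh: "lie_subalg hh" "fin_codim hh L"
    and left: "\<And>x y. x \<in> hh \<Longrightarrow> y \<in> hh \<Longrightarrow> h (sl2_bracket x y) = sl2_bracket (h x) y"
    and right: "\<And>x y. x \<in> hh \<Longrightarrow> y \<in> hh \<Longrightarrow> h (sl2_bracket x y) = sl2_bracket x (h y)"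
    by blast+
  obtain q where q: "q \<noteq> 0" "sl2_multiples q \<subseteq> hh"
    using subalgebra_contains_sl2_multiples[OF hh] by blast
  obtain A where A: "\<forall>x\<in>hh. sl2_pmult q (h x) = sl2_pmult A x"
    using bracket_compatible_map_is_multiplier[OF q left right] by blast
  have "fract_multiple (Fract A q) x (h x)" if "x \<in> hh" for x
    using A that fract_multiple_if_pmult_eq[OF q(1)] by blast
  moreover have "hh \<subseteq> L" using hh(2) by (simp add: fin_codim_def)
  ultimately have "represents L P (Fract A q)"
    unfolding represents_def P fst_conv snd_conv using q by (intro exI[of _ q]) blast
  then show ?thesis ..
qed

lemma represents_surj: "\<exists>P. admissible L P \<and> represents L P f"
proof -
  obtain a b where f: "f = Fract a b" "b \<noteq> 0" by (cases f)
  obtain q where "q \<noteq> 0" "sl2_multiples q \<subseteq> L"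
    using lie_subalg_contains_sl2_multiples[OF lie_subalg_L fin_codim_L] by blast
  then show ?thesis
    using admissible_fraction_map[OF _ f(2) subspace_L] represents_fraction_map[OF _ f(2)] f(1) by blast
qed

end

theorem theorem6p9:
  fixes L :: "sl2 set"
  assumes "lie_subalg L" and "fin_codim L UNIV"
  shows "(\<forall>p q. admissible L p \<longrightarrow> admissible L q \<longrightarrow>
            adm_equiv L (adm_mul p q) (adm_mul q p))
       \<and> (\<exists>\<Phi> :: sl2_pair \<Rightarrow> complex poly fract.
            (\<forall>p q. admissible L p \<longrightarrow> admissible L q \<longrightarrow> (\<Phi> p = \<Phi> q \<longleftrightarrow> adm_equiv L p q))
          \<and> (\<forall>r. \<exists>p. admissible L p \<and> \<Phi> p = r)
          \<and> (\<forall>k p. admissible L p \<longrightarrow> \<Phi> (adm_scale k p) = Fract [:k:] 1 * \<Phi> p)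
          \<and> (\<forall>p q. admissible L p \<longrightarrow> admissible L q \<longrightarrow> \<Phi> (adm_add p q) = \<Phi> p + \<Phi> q)
          \<and> (\<forall>p q. admissible L p \<longrightarrow> admissible L q \<longrightarrow> \<Phi> (adm_mul p q) = \<Phi> p * \<Phi> q))"
proof -
  interpret finite_codim_subalgebra L using assms by unfold_locales
  define \<Phi> where "\<Phi> P = (THE f. represents L P f)" for P
  have \<Phi>_eq: "\<Phi> P = f" if "represents L P f" for P f
    unfolding \<Phi>_def using that represents_unique by blast
  have rep: "represents L P (\<Phi> P)" if "admissible L P" for P
    using admissible_represents[OF that] \<Phi>_eq by blast
  have "adm_equiv L (adm_mul p q) (adm_mul q p)" if "admissible L p" "admissible L q" for p q
    using represents_mul[OF rep[OF that(1)] rep[OF that(2)]] represents_mul[OF rep[OF that(2)] rep[OF that(1)]]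
    by (simp add: mult.commute represents_imp_adm_equiv)
  moreover have "\<Phi> p = \<Phi> q \<longleftrightarrow> adm_equiv L p q" if "admissible L p" "admissible L q" for p q
    using rep[OF that(1)] rep[OF that(2)] \<Phi>_eq represents_imp_adm_equiv adm_equiv_represents by metis
  moreover have "\<exists>p. admissible L p \<and> \<Phi> p = r" for r
    using represents_surj \<Phi>_eq by blast
  ultimately show ?thesis
    using rep \<Phi>_eq represents_scale represents_add represents_mul by (intro conjI exI[of _ \<Phi>]) auto
qed

end
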